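(* Let $X$ be a complete metric space, $\mathcal S=(X,(\phi_j)_{j=0}^{n-1})$ a Matkowski contractive GIFS of degree $m$ with attractor $A_{\mathcal S}$, and $u_{\mathcal Z}$ the fuzzy attractor of the GIFZS $\mathcal Z_{\mathcal S}=(X,(\phi_j)_{j=0}^{n-1},(\rho_j)_{j=0}^{n-1})$ (with $(\rho_j)$ admissible). Then for every nonempty compact $B\subseteq X$ and every $v\in\mathcal F_X^*$: (a) if $\mathcal Z_{\mathcal S}(v,\dots,v)\le v$ then $u_{\mathcal Z}\le v$; (b) if $\bigcup_j\phi_j(B\times\cdots\times B)\subseteq B$ then $A_{\mathcal S}\subseteq B$; (c) if $v\le\mathcal Z_{\mathcal S}(v,\dots,v)$ then $v\le u_{\mathcal Z}$; (d) if $B\subseteq\bigcup_j\phi_j(B\times\cdots\times B)$ then $B\subseteq A_{\mathcal S}$.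
   Context: A fuzzy subset of $X$ is $u:X\to[0,1]$; $u\le v$ means pointwise inequality. $\mathcal F_X^*$: fuzzy subsets that are normal, usc and compactly supported. $X^m$ has the maximum metric $d^m$. For $T:Z\to Y$, $T(u)(y)=\sup\{u(z):T(z)=y\}$ if $y\in T(Z)$, else $0$; $\rho(u)=\rho\circ u$; $(u_0\times\cdots\times u_{m-1})(x_0,\dots,x_{m-1})=\min_iu_i(x_i)$; $\vee$ is pointwise max. A family $(\rho_j)$ of maps $[0,1]\to[0,1]$ is admissible if each is nondecreasing, right continuous, $\rho_j(0)=0$, and $\rho_j(1)=1$ for some $j$. A GIFS of degree $m$ is $(X,(\phi_j))$ with continuous $\phi_j:X^m\to X$; it is Matkowski contractive if each $\phi_j$ satisfies $d(\phi_j(x),\phi_j(y))\le\varphi_j(d^m(x,y))$ for some nondecreasing $\varphi_j:[0,\infty)\to[0,\infty)$ with $\varphi_j^{(k)}(t)\to0$ for all $t>0$. For such $\mathcal S$ on complete $X$, its attractor $A_{\mathcal S}$ is the unique nonempty compact set with $A_{\mathcal S}=\bigcup_j\phi_j(A_{\mathcal S}\times\cdots\times A_{\mathcal S})$. The GIFZS operator is $\mathcal Z_{\mathcal S}(u_0,\dots,u_{m-1})=\bigvee_j\rho_j(\phi_j(u_0\times\cdots\times u_{m-1}))$ and the fuzzy attractor is the unique $u_{\mathcal Z}\in\mathcal F_X^*$ with $\mathcal Z_{\mathcal S}(u_{\mathcal Z},\dots,u_{\mathcal Z})=u_{\mathcal Z}$. *)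

theory Defs
  imports "HOL-Analysis.Analysis"
begin

text \<open>Fuzzy subsets of X are modelled as functions X \<Rightarrow> real taking values in [0,1].
  X^m is modelled as the vector type 'a^'m with 'm a finite index type of cardinality m.\<close>

definition fuzzy_set :: "('a \<Rightarrow> real) \<Rightarrow> bool" where
  "fuzzy_set u \<longleftrightarrow> (\<forall>x. 0 \<le> u x \<and> u x \<le> 1)"

definition fuzzy_support :: "('a::topological_space \<Rightarrow> real) \<Rightarrow> 'a set" where
  "fuzzy_support u = closure {x. 0 < u x}"

definition Fstar :: "('a::topological_space \<Rightarrow> real) set" where
  "Fstar = {u. fuzzy_set u \<and> (\<exists>x. u x = 1) \<and> (\<forall>\<alpha>. closed {x. \<alpha> \<le> u x})
              \<and> compact (fuzzy_support u)}"

definition dmax :: "('a::metric_space)^'m \<Rightarrow> 'a^'m \<Rightarrow> real" where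
  "dmax x y = Max (range (\<lambda>i. dist (x $ i) (y $ i)))"

definition fz_image :: "('z \<Rightarrow> 'y) \<Rightarrow> ('z \<Rightarrow> real) \<Rightarrow> 'y \<Rightarrow> real" where
  "fz_image T u y = (if y \<in> range T then Sup {u z | z. T z = y} else 0)"

definition fz_prod :: "('m::finite \<Rightarrow> 'a \<Rightarrow> real) \<Rightarrow> 'a^'m \<Rightarrow> real" where
  "fz_prod us x = Min (range (\<lambda>i. us i (x $ i)))"

definition admissible :: "nat \<Rightarrow> (nat \<Rightarrow> real \<Rightarrow> real) \<Rightarrow> bool" where
  "admissible n \<rho> \<longleftrightarrow>
     (\<forall>j<n. (\<forall>t\<in>{0..1}. \<rho> j t \<in> {0..1})
          \<and> (\<forall>s t. 0 \<le> s \<longrightarrow> s \<le> t \<longrightarrow> t \<le> 1 \<longrightarrow> \<rho> j s \<le> \<rho> j t)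
          \<and> (\<forall>t\<in>{0..<1}. continuous (at_right t) (\<rho> j))
          \<and> \<rho> j 0 = 0)
     \<and> (\<exists>j<n. \<rho> j 1 = 1)"

definition matkowski_GIFS :: "nat \<Rightarrow> (nat \<Rightarrow> ('a::metric_space)^'m \<Rightarrow> 'a) \<Rightarrow> bool" where
  "matkowski_GIFS n \<phi> \<longleftrightarrow>
     (\<forall>j<n. continuous_on UNIV (\<phi> j) \<and>
        (\<exists>\<psi>::real \<Rightarrow> real. mono_on {0..} \<psi> \<and> (\<forall>t\<ge>0. 0 \<le> \<psi> t)
           \<and> (\<forall>t>0. (\<lambda>k. (\<psi> ^^ k) t) \<longlonglongrightarrow> 0)
           \<and> (\<forall>x y. dist (\<phi> j x) (\<phi> j y) \<le> \<psi> (dmax x y))))"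

definition GIFS_op :: "nat \<Rightarrow> (nat \<Rightarrow> 'a^'m \<Rightarrow> 'a) \<Rightarrow> 'a set \<Rightarrow> 'a set" where
  "GIFS_op n \<phi> B = (\<Union>j<n. \<phi> j ` {x. \<forall>i. x $ i \<in> B})"

definition GIFS_attractor :: "nat \<Rightarrow> (nat \<Rightarrow> ('a::metric_space)^'m \<Rightarrow> 'a) \<Rightarrow> 'a set" where
  "GIFS_attractor n \<phi> = (THE A. A \<noteq> {} \<and> compact A \<and> A = GIFS_op n \<phi> A)"

definition GIFZS_op :: "nat \<Rightarrow> (nat \<Rightarrow> 'a^'m::finite \<Rightarrow> 'a) \<Rightarrow> (nat \<Rightarrow> real \<Rightarrow> real)
      \<Rightarrow> ('m \<Rightarrow> 'a \<Rightarrow> real) \<Rightarrow> 'a \<Rightarrow> real" where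
  "GIFZS_op n \<phi> \<rho> us = (\<lambda>x. Max ((\<lambda>j. \<rho> j (fz_image (\<phi> j) (fz_prod us) x)) ` {..<n}))"

definition fuzzy_attractor :: "nat \<Rightarrow> (nat \<Rightarrow> ('a::metric_space)^'m::finite \<Rightarrow> 'a)
      \<Rightarrow> (nat \<Rightarrow> real \<Rightarrow> real) \<Rightarrow> 'a \<Rightarrow> real" where
  "fuzzy_attractor n \<phi> \<rho> = (THE u. u \<in> Fstar \<and> GIFZS_op n \<phi> \<rho> (\<lambda>_. u) = u)"

end

theory Submission
  imports Defs
begin

text \<open>Everything rests on one excess argument. Let \<open>\<psi>\<close> be a Matkowski function for all the
  maps \<open>\<phi> j\<close>, and let \<open>P a\<close>, \<open>Q a\<close> (\<open>a \<in> I\<close>) be sets with \<open>Q a\<close> compact and nonempty, such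
  that every point of \<open>P a\<close> is \<open>\<phi> j z\<close> with all coordinates of \<open>z\<close> in some \<open>P b\<close> while \<open>\<phi> j\<close>
  maps \<open>cube (Q b)\<close> into \<open>Q a\<close>. The supremum \<open>E\<close> of all excesses \<open>infdist x (Q a)\<close>,
  \<open>x \<in> P a\<close>, then satisfies \<open>E \<le> \<psi> E\<close>, so \<open>E = 0\<close> and \<open>P a \<subseteq> Q a\<close>. Parts (b) and (d) are the
  case of a single pair of sets; parts (a) and (c) apply it to the \<open>\<alpha>\<close>-cuts of two fuzzy sets,
  because the \<open>\<alpha>\<close>-cut of \<open>Z u\<close> is the union over \<open>j\<close> of the \<open>\<phi> j\<close>-images of the cubes over
  the \<open>\<beta>\<^sub>j\<close>-cuts of \<open>u\<close>, \<open>\<beta>\<^sub>j\<close> being the least level at which \<open>\<rho> j\<close> reaches \<open>\<alpha>\<close>.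

  The attractors referred to by the definite descriptions are \<open>\<Inter>k. F\<^sup>k K\<close> and
  \<open>INF k. Z\<^sup>k (indicator K)\<close> for a nonempty compact \<open>K\<close> with \<open>F K \<subseteq> K\<close>. Such a \<open>K\<close> is the closure
  of the increasing orbit \<open>{x0}, insert x0 (F {x0}), \<dots>\<close>, which is totally bounded because the
  excesses of its consecutive terms are dominated by the iterates of \<open>\<psi>\<close>.\<close>

section \<open>Cubes\<close>

definition cube :: "'a set \<Rightarrow> ('a^'m::finite) set" where
  "cube S = {z. \<forall>i. z $ i \<in> S}"

lemma cube_mono: "S \<subseteq> T \<Longrightarrow> cube S \<subseteq> cube T"
  unfolding cube_def by auto

lemma cube_eq_empty_iff: "(cube S :: ('a^'m::finite) set) = {} \<longleftrightarrow> S = {}"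
proof
  show "S = {}" if "cube S = ({} :: ('a^'m) set)"
  proof (rule ccontr)
    assume "S \<noteq> {}"
    then obtain s where "s \<in> S" by blast
    then have "(\<chi> i. s) \<in> (cube S :: ('a^'m) set)" by (simp add: cube_def)
    then show False using that by blast
  qed
qed (simp add: cube_def)

lemma cube_Inter: "cube (\<Inter>k. C k) = (\<Inter>k. cube (C k))"
  unfolding cube_def by auto

lemma convergent_subseq_components:
  fixes f :: "nat \<Rightarrow> ('a::metric_space)^('m::finite)"
  assumes S: "compact S" and f: "\<And>k i. f k $ i \<in> S" and D: "finite D"
  shows "\<exists>r l. strict_mono r \<and> (\<forall>i\<in>D. l i \<in> S \<and> ((\<lambda>k. f (r k) $ i) \<longlonglongrightarrow> l i))"
  using D
proof (induction D rule: finite_induct)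
  case empty
  show ?case by (rule exI[of _ id]) (auto simp: strict_mono_def)
next
  case (insert i D)
  then obtain r1 l1 where r1: "strict_mono r1"
    and l1: "\<forall>i\<in>D. l1 i \<in> S \<and> ((\<lambda>k. f (r1 k) $ i) \<longlonglongrightarrow> l1 i)"
    by blast
  obtain l2 r2 where l2: "l2 \<in> S" and r2: "strict_mono r2"
    and lim: "((\<lambda>k. f (r1 k) $ i) \<circ> r2) \<longlonglongrightarrow> l2"
    using seq_compactE[OF compact_imp_seq_compact[OF S], of "\<lambda>k. f (r1 k) $ i"] f by metis
  have "(\<lambda>k. f (r1 (r2 k)) $ j) \<longlonglongrightarrow> l1 j" if "j \<in> D" for j
    using LIMSEQ_subseq_LIMSEQ[OF _ r2, of "\<lambda>k. f (r1 k) $ j"] l1 that by (simp add: o_def)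
  moreover have "strict_mono (r1 \<circ> r2)" using r1 r2 by (rule strict_mono_o)
  ultimately show ?case
    using l1 l2 lim by (intro exI[of _ "r1 \<circ> r2"] exI[of _ "l1(i := l2)"]) (auto simp: o_def)
qed

lemma compact_cube:
  assumes S: "compact (S::('a::metric_space) set)"
  shows "compact (cube S :: ('a^'m::finite) set)"
  unfolding compact_eq_seq_compact_metric
proof (rule seq_compactI)
  fix f :: "nat \<Rightarrow> 'a^'m" assume "\<forall>n. f n \<in> cube S"
  then have "\<And>k i. f k $ i \<in> S" by (auto simp: cube_def)
  then obtain r l where r: "strict_mono r" and l: "\<forall>i. l i \<in> S \<and> ((\<lambda>k. f (r k) $ i) \<longlonglongrightarrow> l i)"
    using convergent_subseq_components[of S f UNIV] S by auto
  have "(f \<circ> r) \<longlonglongrightarrow> (\<chi> i. l i)"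
    by (rule vec_tendstoI) (use l in \<open>simp add: o_def\<close>)
  moreover have "(\<chi> i. l i) \<in> cube S" using l by (simp add: cube_def)
  ultimately show "\<exists>l\<in>cube S. \<exists>r. strict_mono r \<and> (f \<circ> r) \<longlonglongrightarrow> l" using r by blast
qed

lemma infdist_attained:
  fixes S :: "('a::metric_space) set"
  assumes "compact S" "S \<noteq> {}"
  obtains y where "y \<in> S" "infdist x S = dist x y"
proof -
  have "continuous_on S (dist x)" by (intro continuous_intros)
  then obtain y where y: "y \<in> S" "\<And>s. s \<in> S \<Longrightarrow> dist x y \<le> dist x s"
    using continuous_attains_inf[OF assms] by blast
  have "dist x y \<le> infdist x S"
    unfolding infdist_def using assms(2) y by (auto intro: cINF_greatest)
  then show ?thesis using that y infdist_le[OF y(1), of x] by fastforce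
qed

lemma cube_infdist_approx:
  assumes "compact Q" "Q \<noteq> {}" and "\<And>i. infdist (z $ i) Q \<le> c"
  obtains y where "y \<in> cube Q" "\<And>i. dist (z $ i) (y $ i) \<le> c"
proof -
  have "\<forall>i. \<exists>q\<in>Q. infdist (z $ i) Q = dist (z $ i) q"
    using infdist_attained[OF assms(1,2)] by metis
  then obtain q where "\<And>i. q i \<in> Q \<and> infdist (z $ i) Q = dist (z $ i) (q i)" by metis
  then show ?thesis using that[of "\<chi> i. q i"] assms(3) by (auto simp: cube_def)
qed

lemma compact_decseq_Inter_nonempty:
  fixes C :: "nat \<Rightarrow> 'a::t2_space set"
  assumes "\<And>k. compact (C k)" "\<And>k. C k \<noteq> {}" "decseq C"
  shows "(\<Inter>k. C k) \<noteq> {}"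
proof -
  have "C 0 \<inter> (\<Inter>k. C k) \<noteq> {}"
  proof (rule compact_imp_fip_image[OF assms(1)])
    show "closed (C k)" for k by (simp add: assms(1) compact_imp_closed)
    fix I' :: "nat set" assume "finite I'"
    then have "C (Max (insert 0 I')) \<subseteq> C k" if "k \<in> insert 0 I'" for k
      using that by (intro decseqD[OF assms(3)] Max_ge) auto
    then have "C (Max (insert 0 I')) \<subseteq> C 0 \<inter> (\<Inter>k\<in>I'. C k)" by blast
    then show "C 0 \<inter> (\<Inter>k\<in>I'. C k) \<noteq> {}" using assms(2) by blast
  qed
  then show ?thesis by blast
qed

lemma continuous_image_Inter_decseq:
  fixes C :: "nat \<Rightarrow> 'a::t2_space set" and f :: "'a \<Rightarrow> 'b::t2_space"
  assumes C: "\<And>k. compact (C k)" "decseq C" and f: "continuous_on (C 0) f"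
  shows "f ` (\<Inter>k. C k) = (\<Inter>k. f ` C k)"
proof
  show "(\<Inter>k. f ` C k) \<subseteq> f ` (\<Inter>k. C k)"
  proof
    fix y assume y: "y \<in> (\<Inter>k. f ` C k)"
    have "compact {x \<in> C k. f x = y}" for k
    proof -
      have "continuous_on (C k) f"
        using C(2) by (intro continuous_on_subset[OF f]) (simp add: decseq_def)
      then have "closed {x \<in> C k. f x = y}"
        using C(1) by (simp add: continuous_closed_preimage_constant compact_imp_closed)
      then have "compact (C k \<inter> {x \<in> C k. f x = y})" by (rule compact_Int_closed[OF C(1)])
      then show ?thesis by (simp add: Int_absorb1)
    qed
    moreover have "decseq (\<lambda>k. {x \<in> C k. f x = y})"
      using C(2) by (auto simp: decseq_def)
    ultimately have "(\<Inter>k. {x \<in> C k. f x = y}) \<noteq> {}"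
      using y by (intro compact_decseq_Inter_nonempty) auto
    then show "y \<in> f ` (\<Inter>k. C k)" by blast
  qed
qed blast

lemma Inter_Union_decseq_finite:
  assumes "finite J" and "\<And>j. j \<in> J \<Longrightarrow> decseq (A j)"
  shows "(\<Inter>k. \<Union>j\<in>J. A j k) = (\<Union>j\<in>J. \<Inter>k. A j k)"
proof
  show "(\<Inter>k. \<Union>j\<in>J. A j k) \<subseteq> (\<Union>j\<in>J. \<Inter>k. A j k)"
  proof
    fix x assume x: "x \<in> (\<Inter>k. \<Union>j\<in>J. A j k)"
    show "x \<in> (\<Union>j\<in>J. \<Inter>k. A j k)"
    proof (rule ccontr)
      assume "x \<notin> (\<Union>j\<in>J. \<Inter>k. A j k)"
      then have "\<forall>j\<in>J. \<exists>k. x \<notin> A j k" by blast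
      then obtain kk where kk: "\<And>j. j \<in> J \<Longrightarrow> x \<notin> A j (kk j)" by metis
      obtain j where j: "j \<in> J" "x \<in> A j (Max (insert 0 (kk ` J)))" using x by blast
      have "kk j \<le> Max (insert 0 (kk ` J))" using assms(1) j(1) by simp
      then have "x \<in> A j (kk j)"
        using j decseqD[OF assms(2)[OF j(1)]] by blast
      then show False using kk j(1) by blast
    qed
  qed
qed blast

section \<open>Matkowski functions\<close>

definition matkowski_function :: "(real \<Rightarrow> real) \<Rightarrow> bool" where
  "matkowski_function \<psi> \<longleftrightarrow>
     mono_on {0..} \<psi> \<and> (\<forall>t\<ge>0. 0 \<le> \<psi> t) \<and> (\<forall>t>0. (\<lambda>k. (\<psi> ^^ k) t) \<longlonglongrightarrow> 0)"

lemma below_diagonal_at_zero: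
  fixes \<psi> :: "real \<Rightarrow> real"
  assumes "mono_on {0..} \<psi>" "\<And>t. t > 0 \<Longrightarrow> \<psi> t < t"
  shows "\<psi> 0 \<le> 0"
proof (rule field_le_epsilon)
  fix e :: real assume "e > 0"
  then show "\<psi> 0 \<le> 0 + e" using mono_onD[OF assms(1), of 0 e] assms(2)[of e] by simp
qed

context
  fixes \<psi> :: "real \<Rightarrow> real"
  assumes \<psi>: "matkowski_function \<psi>"
begin

lemma matkowski_mono: "0 \<le> s \<Longrightarrow> s \<le> t \<Longrightarrow> \<psi> s \<le> \<psi> t"
  using \<psi> unfolding matkowski_function_def by (auto intro: mono_onD)

lemma matkowski_nonneg: "0 \<le> t \<Longrightarrow> 0 \<le> \<psi> t"
  using \<psi> unfolding matkowski_function_def by blast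

lemma matkowski_less:
  assumes t: "t > 0" shows "\<psi> t < t"
proof (rule ccontr)
  assume "\<not> \<psi> t < t"
  then have "t \<le> (\<psi> ^^ k) t" for k
  proof (induction k)
    case (Suc k)
    then show ?case using t matkowski_mono[of t "(\<psi> ^^ k) t"] by simp
  qed simp
  moreover have "(\<lambda>k. (\<psi> ^^ k) t) \<longlonglongrightarrow> 0" using \<psi> t unfolding matkowski_function_def by blast
  ultimately have "t \<le> 0" by (intro LIMSEQ_le_const) auto
  then show False using t by simp
qed

lemma matkowski_gap:
  assumes L: "L > 0" shows "\<exists>s>L. \<psi> s \<le> L"
proof (rule ccontr)
  assume "\<not> ?thesis"
  then have gt: "\<And>s. s > L \<Longrightarrow> L < \<psi> s" by (meson not_le)
  have "L < (\<psi> ^^ k) (L + 1)" for k by (induction k) (simp_all add: gt)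
  moreover have "(\<lambda>k. (\<psi> ^^ k) (L + 1)) \<longlonglongrightarrow> 0" using \<psi> L unfolding matkowski_function_def by simp
  ultimately have "L \<le> 0" by (intro LIMSEQ_le_const) (auto intro: less_imp_le)
  then show False using L by simp
qed

lemma matkowski_dominated_LIMSEQ:
  assumes d: "\<And>k. 0 \<le> d k" "\<And>k. d (Suc k) \<le> \<psi> (d k)"
  shows "d \<longlonglongrightarrow> 0"
proof -
  have bound: "d k \<le> (\<psi> ^^ k) (d 0)" for k
  proof (induction k)
    case (Suc k)
    then show ?case using d matkowski_mono[of "d k"] by (auto intro: order_trans)
  qed simp
  have "(\<lambda>k. (\<psi> ^^ k) (d 0)) \<longlonglongrightarrow> 0"
  proof (cases "d 0 = 0")
    case True
    have "\<psi> 0 \<le> 0"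
      using \<psi> matkowski_less by (intro below_diagonal_at_zero) (simp_all add: matkowski_function_def)
    then have "(\<psi> ^^ k) 0 = 0" for k using matkowski_nonneg[of 0] by (induction k) auto
    then show ?thesis using True by simp
  next
    case False
    then show ?thesis using \<psi> d(1)[of 0] unfolding matkowski_function_def by simp
  qed
  then show ?thesis
    using d(1) bound
    by (intro tendsto_sandwich[of "\<lambda>_. 0" d sequentially "\<lambda>k. (\<psi> ^^ k) (d 0)"])
      (auto intro: always_eventually)
qed

end

lemma matkowski_functionI:
  fixes \<psi> :: "real \<Rightarrow> real"
  assumes mono: "mono_on {0..} \<psi>" and nonneg: "\<And>t. 0 \<le> t \<Longrightarrow> 0 \<le> \<psi> t"
    and less: "\<And>t. t > 0 \<Longrightarrow> \<psi> t < t" and gap: "\<And>L. L > 0 \<Longrightarrow> \<exists>s>L. \<psi> s \<le> L"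
  shows "matkowski_function \<psi>"
  unfolding matkowski_function_def
proof (intro conjI mono nonneg allI impI)
  fix t :: real assume t: "t > 0"
  define d where "d = (\<lambda>k. (\<psi> ^^ k) t)"
  have d_Suc_eq: "d (Suc k) = \<psi> (d k)" for k by (simp add: d_def)
  have d_nonneg: "0 \<le> d k" for k unfolding d_def using t by (induction k) (simp_all add: nonneg)
  have "\<psi> 0 \<le> 0" using mono less by (rule below_diagonal_at_zero)
  then have "\<psi> x \<le> x" if "0 \<le> x" for x using less[of x] that by (cases "x = 0") auto
  then have d_Suc: "d (Suc k) \<le> d k" for k using d_nonneg[of k] by (simp add: d_Suc_eq)
  then obtain L where L: "d \<longlonglongrightarrow> L" and L_le: "\<And>k. L \<le> d k"
    using decseq_convergent[OF decseq_SucI, of d 0] d_nonneg by blast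
  show "(\<lambda>k. (\<psi> ^^ k) t) \<longlonglongrightarrow> 0"
  proof (cases "L = 0")
    case False
    moreover have "L \<ge> 0" using d_nonneg by (intro LIMSEQ_le_const[OF L]) auto
    ultimately have "L > 0" by simp
    then obtain s where s: "s > L" "\<psi> s \<le> L" using gap by blast
    obtain k where "d k < s" using order_tendstoD(2)[OF L s(1)] by (auto simp: eventually_sequentially)
    then have "\<psi> (d k) \<le> \<psi> s" using mono d_nonneg[of k] by (intro mono_onD[OF mono]) auto
    then have "d (Suc k) \<le> L" using s(2) unfolding d_Suc_eq by linarith
    then have "d (Suc k) = L" using L_le[of "Suc k"] by linarith
    then have "d (Suc (Suc k)) < L" using less[OF \<open>L > 0\<close>] unfolding d_Suc_eq[of "Suc k"] by simp
    then show ?thesis using L_le[of "Suc (Suc k)"] by linarith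
  qed (use L in \<open>simp add: d_def\<close>)
qed

lemma matkowski_function_Max:
  assumes J: "finite J" "J \<noteq> {}" and \<psi>: "\<And>j. j \<in> J \<Longrightarrow> matkowski_function (\<psi> j)"
  shows "matkowski_function (\<lambda>t. Max ((\<lambda>j. \<psi> j t) ` J))"
proof (rule matkowski_functionI)
  show "mono_on {0..} (\<lambda>t. Max ((\<lambda>j. \<psi> j t) ` J))"
  proof (rule mono_onI)
    fix r s :: real assume rs: "r \<in> {0..}" "r \<le> s"
    have "\<psi> j r \<le> Max ((\<lambda>j. \<psi> j s) ` J)" if "j \<in> J" for j
      using matkowski_mono[OF \<psi>[OF that], of r s] J that rs
      by (meson Max_ge atLeast_iff finite_imageI imageI order_trans)
    then show "Max ((\<lambda>j. \<psi> j r) ` J) \<le> Max ((\<lambda>j. \<psi> j s) ` J)" using J by simp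
  qed
  show "0 \<le> Max ((\<lambda>j. \<psi> j t) ` J)" if "0 \<le> t" for t
  proof -
    have "\<forall>j\<in>J. 0 \<le> \<psi> j t" using matkowski_nonneg[OF \<psi> that] by blast
    then show ?thesis using J by (auto simp: Max_ge_iff)
  qed
  show "Max ((\<lambda>j. \<psi> j t) ` J) < t" if "t > 0" for t
  proof -
    have "\<forall>j\<in>J. \<psi> j t < t" using matkowski_less[OF \<psi> that] by blast
    then show ?thesis using J by simp
  qed
  show "\<exists>s>L. Max ((\<lambda>j. \<psi> j s) ` J) \<le> L" if L: "L > 0" for L
  proof -
    obtain ss where ss: "\<And>j. j \<in> J \<Longrightarrow> ss j > L \<and> \<psi> j (ss j) \<le> L"
      using matkowski_gap[OF \<psi> L] by metis
    define s where "s = Min (ss ` J)"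
    have "s > L" using J ss by (simp add: s_def)
    moreover have "\<psi> j s \<le> L" if "j \<in> J" for j
    proof -
      have "s \<le> ss j" using J that by (simp add: s_def)
      then have "\<psi> j s \<le> \<psi> j (ss j)" using \<open>s > L\<close> L by (intro matkowski_mono[OF \<psi>[OF that]]) auto
      then show ?thesis using ss[OF that] by simp
    qed
    ultimately show ?thesis using J by (intro exI[of _ s]) (auto simp: Max_le_iff)
  qed
qed

lemma dmax_nonneg: "0 \<le> dmax (x::('a::metric_space)^('m::finite)) y"
  unfolding dmax_def by (simp add: Max_ge_iff)

lemma dmax_le: "(\<And>i. dist (x $ i) (y $ i) \<le> c) \<Longrightarrow> dmax (x::('a::metric_space)^('m::finite)) y \<le> c"
  unfolding dmax_def by (simp add: Max_le_iff)

section \<open>Generalized IFS and their attractors\<close>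

lemma infdist_le_infdist_add:
  assumes B: "compact B" "B \<noteq> {}" and e: "\<And>b. b \<in> B \<Longrightarrow> infdist b A \<le> e"
  shows "infdist x A \<le> infdist x B + e"
proof -
  obtain y where y: "y \<in> B" "infdist x B = dist x y" using infdist_attained[OF B] by blast
  have "infdist x A \<le> infdist y A + dist x y" by (rule infdist_triangle)
  then show ?thesis using e[OF y(1)] y(2) by simp
qed

lemma compact_closure_Union_incseq:
  fixes S :: "nat \<Rightarrow> 'a::complete_space set"
  assumes S: "\<And>k. compact (S k)" "\<And>k. S k \<noteq> {}" "incseq S"
    and tail: "\<And>r. r > 0 \<Longrightarrow> \<exists>k. \<forall>m\<ge>k. \<forall>x\<in>S m. infdist x (S k) \<le> r"
  shows "compact (closure (\<Union>k. S k))"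
  unfolding compact_eq_totally_bounded
proof (intro conjI allI impI)
  show "complete (closure (\<Union>k. S k))" by (simp add: complete_eq_closed)
  fix e :: real assume e: "e > 0"
  obtain k where k: "\<And>m x. k \<le> m \<Longrightarrow> x \<in> S m \<Longrightarrow> infdist x (S k) \<le> e/4"
    using tail[of "e/4"] e by auto
  have "e/4 > 0" using e by simp
  then obtain N where N: "finite N" "S k \<subseteq> (\<Union>c\<in>N. ball c (e/4))"
    using S(1)[of k] unfolding compact_eq_totally_bounded by blast
  have "(\<Union>k. S k) \<subseteq> (\<Union>c\<in>N. cball c (e/2))"
  proof
    fix x assume "x \<in> (\<Union>k. S k)"
    then obtain m where m: "x \<in> S m" by blast
    have "infdist x (S k) \<le> e/4"
    proof (cases "k \<le> m")
      case False
      then have "x \<in> S k" using m monoD[OF S(3), of m k] by auto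
      then show ?thesis using e by simp
    qed (use k m in blast)
    moreover obtain y where y: "y \<in> S k" "infdist x (S k) = dist x y"
      using infdist_attained[OF S(1,2)] by blast
    moreover obtain c where "c \<in> N" "dist c y < e/4" using N(2) y(1) by auto
    ultimately have "dist c x \<le> e/2" using dist_triangle[of c x y] by (simp add: dist_commute)
    then show "x \<in> (\<Union>c\<in>N. cball c (e/2))" using \<open>c \<in> N\<close> by auto
  qed
  then have "closure (\<Union>k. S k) \<subseteq> (\<Union>c\<in>N. cball c (e/2))"
    using N(1) by (intro closure_minimal closed_UN) auto
  also have "\<dots> \<subseteq> (\<Union>c\<in>N. ball c e)" using e by (intro UN_mono) auto
  finally show "\<exists>N. finite N \<and> closure (\<Union>k. S k) \<subseteq> (\<Union>c\<in>N. ball c e)" using N(1) by blast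
qed

locale gifs =
  fixes n :: nat and \<phi> :: "nat \<Rightarrow> ('a::complete_space)^('m::finite) \<Rightarrow> 'a" and \<psi> :: "real \<Rightarrow> real"
  assumes n_pos: "0 < n"
    and continuous: "\<And>j. j < n \<Longrightarrow> continuous_on UNIV (\<phi> j)"
    and matkowski: "matkowski_function \<psi>"
    and contraction: "\<And>j x y. j < n \<Longrightarrow> dist (\<phi> j x) (\<phi> j y) \<le> \<psi> (dmax x y)"
begin

abbreviation F :: "'a set \<Rightarrow> 'a set" where
  "F S \<equiv> GIFS_op n \<phi> S"

lemma GIFS_op_eq: "F S = (\<Union>j<n. \<phi> j ` cube S)"
  unfolding GIFS_op_def cube_def by simp

lemma image_cube_subset_GIFS_op: "j < n \<Longrightarrow> \<phi> j ` cube S \<subseteq> F S"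
  unfolding GIFS_op_eq by blast

lemma GIFS_op_mono: "S \<subseteq> T \<Longrightarrow> F S \<subseteq> F T"
  unfolding GIFS_op_eq using cube_mono by blast

lemma GIFS_op_nonempty:
  assumes "S \<noteq> {}" shows "F S \<noteq> {}"
proof -
  obtain z where "z \<in> (cube S :: ('a^'m) set)" using assms cube_eq_empty_iff by blast
  then have "\<phi> 0 z \<in> F S" using n_pos unfolding GIFS_op_eq by blast
  then show ?thesis by blast
qed

lemma compact_image_cube: "j < n \<Longrightarrow> compact S \<Longrightarrow> compact (\<phi> j ` cube S)"
  by (rule compact_continuous_image[OF continuous_on_subset[OF continuous] compact_cube]) auto

lemma compact_GIFS_op: "compact S \<Longrightarrow> compact (F S)"
  unfolding GIFS_op_eq by (rule compact_UN) (auto intro: compact_image_cube)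

lemma dist_image_cube_le:
  assumes j: "j < n" and d: "\<And>i. dist (z $ i) (y $ i) \<le> c"
  shows "dist (\<phi> j z) (\<phi> j y) \<le> \<psi> c"
proof -
  have "\<psi> (dmax z y) \<le> \<psi> c" by (intro matkowski_mono[OF matkowski] dmax_nonneg dmax_le d)
  then show ?thesis using contraction[OF j, of z y] by simp
qed

lemma infdist_image_cube_le:
  assumes j: "j < n" and Q: "compact Q" "Q \<noteq> {}" and T: "\<phi> j ` cube Q \<subseteq> T"
    and z: "\<And>i. infdist (z $ i) Q \<le> c"
  shows "infdist (\<phi> j z) T \<le> \<psi> c"
proof -
  obtain y where y: "y \<in> cube Q" "\<And>i. dist (z $ i) (y $ i) \<le> c"
    using cube_infdist_approx[OF Q z] by blast
  then have "infdist (\<phi> j z) T \<le> dist (\<phi> j z) (\<phi> j y)" using T by (intro infdist_le) auto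
  also have "\<dots> \<le> \<psi> c" by (rule dist_image_cube_le[OF j y(2)])
  finally show ?thesis .
qed

lemma GIFS_op_Inter_decseq:
  assumes C: "\<And>k. compact (C k)" "decseq C"
  shows "F (\<Inter>k. C k) = (\<Inter>k. F (C k))"
proof -
  have "decseq (\<lambda>k. cube (C k) :: ('a^'m) set)"
    using C(2) cube_mono unfolding decseq_def by blast
  then have "\<phi> j ` cube (\<Inter>k. C k) = (\<Inter>k. \<phi> j ` cube (C k))" if "j < n" for j
    unfolding cube_Inter using C(1) continuous_on_subset[OF continuous[OF that]]
    by (intro continuous_image_Inter_decseq compact_cube) auto
  moreover have "decseq (\<lambda>k. \<phi> j ` cube (C k))" for j
    using C(2) cube_mono unfolding decseq_def by (meson image_mono)
  then have "(\<Inter>k. \<Union>j<n. \<phi> j ` cube (C k)) = (\<Union>j<n. \<Inter>k. \<phi> j ` cube (C k))"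
    by (intro Inter_Union_decseq_finite) auto
  ultimately show ?thesis unfolding GIFS_op_eq by simp
qed


lemma subset_by_excess:
  assumes Q: "\<And>a. a \<in> I \<Longrightarrow> compact (Q a)" "\<And>a. a \<in> I \<Longrightarrow> Q a \<noteq> {}"
    and bounded: "\<And>a x. a \<in> I \<Longrightarrow> x \<in> P a \<Longrightarrow> infdist x (Q a) \<le> R"
    and step: "\<And>a x. a \<in> I \<Longrightarrow> x \<in> P a \<Longrightarrow>
      \<exists>j<n. \<exists>b\<in>I. \<exists>z\<in>cube (P b). x = \<phi> j z \<and> \<phi> j ` cube (Q b) \<subseteq> Q a"
    and a: "a \<in> I"
  shows "P a \<subseteq> Q a"
proof
  fix x assume x: "x \<in> P a"
  define V where "V = {infdist x (Q a) | a x. a \<in> I \<and> x \<in> P a}"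
  have V: "V \<noteq> {}" "bdd_above V"
    using a x bounded unfolding V_def by (auto intro!: bdd_aboveI[of _ R])
  have upper: "infdist y (Q b) \<le> Sup V" if "b \<in> I" "y \<in> P b" for b y
    using that V(2) by (intro cSup_upper) (auto simp: V_def)
  have "infdist y (Q b) \<le> \<psi> (Sup V)" if b: "b \<in> I" and y: "y \<in> P b" for b y
  proof -
    obtain j c z where j: "j < n" and c: "c \<in> I" and z: "z \<in> cube (P c)" and yz: "y = \<phi> j z"
      and image: "\<phi> j ` cube (Q c) \<subseteq> Q b"
      using step[OF b y] by blast
    have "infdist (z $ i) (Q c) \<le> Sup V" for i using upper[OF c] z unfolding cube_def by blast
    then show ?thesis unfolding yz by (rule infdist_image_cube_le[OF j Q(1)[OF c] Q(2)[OF c] image])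
  qed
  then have "Sup V \<le> \<psi> (Sup V)" using V(1) by (intro cSup_least) (auto simp: V_def)
  moreover have "0 \<le> Sup V" using upper[OF a x] infdist_nonneg order_trans by blast
  ultimately have "Sup V = 0" using matkowski_less[OF matkowski, of "Sup V"] by linarith
  then have "infdist x (Q a) = 0" using upper[OF a x] infdist_nonneg[of x "Q a"] by simp
  then show "x \<in> Q a"
    using in_closure_iff_infdist_zero[OF Q(2)[OF a]] Q(1)[OF a] compact_imp_closed closure_closed
    by metis
qed

lemma expanding_subset_invariant:
  assumes P: "compact P" "P \<subseteq> F P" and Q: "compact Q" "Q \<noteq> {}" "F Q \<subseteq> Q"
  shows "P \<subseteq> Q"
proof -
  obtain q where q: "q \<in> Q" using Q(2) by blast
  have bounded: "bounded (P \<union> Q)" using P(1) Q(1) by (simp add: compact_imp_bounded)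
  have "infdist x Q \<le> diameter (P \<union> Q)" if "x \<in> P" for x
    using infdist_le[OF q, of x] diameter_bounded_bound[OF bounded, of x q] q that by simp
  moreover have "\<exists>j<n. \<exists>z\<in>cube P. x = \<phi> j z \<and> \<phi> j ` cube Q \<subseteq> Q" if x: "x \<in> P" for x
  proof -
    obtain j z where "j < n" "z \<in> cube P" "x = \<phi> j z"
      using P(2) x unfolding GIFS_op_eq by blast
    then show ?thesis using image_cube_subset_GIFS_op Q(3) by blast
  qed
  ultimately have "(\<lambda>_::unit. P) () \<subseteq> (\<lambda>_. Q) ()"
    using Q(1,2) by (intro subset_by_excess[where I = UNIV and R = "diameter (P \<union> Q)"]) auto
  then show ?thesis by simp
qed

definition orbit :: "'a \<Rightarrow> nat \<Rightarrow> 'a set" where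
  "orbit x0 k = ((\<lambda>S. insert x0 (F S)) ^^ k) {x0}"

lemma orbit_0 [simp]: "orbit x0 0 = {x0}"
  by (simp add: orbit_def)

lemma orbit_Suc: "orbit x0 (Suc k) = insert x0 (F (orbit x0 k))"
  by (simp add: orbit_def)

lemma compact_orbit: "compact (orbit x0 k)"
  by (induction k) (simp_all add: orbit_Suc compact_GIFS_op)

lemma start_in_orbit: "x0 \<in> orbit x0 k"
  by (cases k) (simp_all add: orbit_Suc)

lemma incseq_orbit: "incseq (orbit x0)"
proof -
  have "orbit x0 k \<subseteq> orbit x0 (Suc k)" for k
    by (induction k) (use GIFS_op_mono in \<open>auto simp: orbit_Suc\<close>)
  then show ?thesis by (simp add: incseq_Suc_iff)
qed

lemma image_cube_orbit_subset: "j < n \<Longrightarrow> \<phi> j ` cube (orbit x0 k) \<subseteq> orbit x0 (Suc k)"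
  using image_cube_subset_GIFS_op by (auto simp: orbit_Suc)

definition orbit_excess :: "'a \<Rightarrow> nat \<Rightarrow> real" where
  "orbit_excess x0 k = Sup ((\<lambda>x. infdist x (orbit x0 k)) ` orbit x0 (Suc k))"

lemma infdist_le_orbit_excess:
  assumes "x \<in> orbit x0 (Suc k)" shows "infdist x (orbit x0 k) \<le> orbit_excess x0 k"
proof -
  have "compact ((\<lambda>x. infdist x (orbit x0 k)) ` orbit x0 (Suc k))"
    by (intro compact_continuous_image continuous_on_infdist continuous_on_id compact_orbit)
  then show ?thesis
    unfolding orbit_excess_def using assms by (intro cSup_upper bounded_imp_bdd_above compact_imp_bounded) auto
qed

lemma orbit_excess_nonneg: "0 \<le> orbit_excess x0 k"
  using infdist_le_orbit_excess[OF start_in_orbit] infdist_nonneg order_trans by blast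

lemma orbit_excess_Suc_le: "orbit_excess x0 (Suc k) \<le> \<psi> (orbit_excess x0 k)"
  unfolding orbit_excess_def[of x0 "Suc k"]
proof (rule cSup_least)
  show "(\<lambda>x. infdist x (orbit x0 (Suc k))) ` orbit x0 (Suc (Suc k)) \<noteq> {}"
    using start_in_orbit by blast
  fix t assume "t \<in> (\<lambda>x. infdist x (orbit x0 (Suc k))) ` orbit x0 (Suc (Suc k))"
  then obtain x where x: "x \<in> orbit x0 (Suc (Suc k))" and t: "t = infdist x (orbit x0 (Suc k))"
    by blast
  show "t \<le> \<psi> (orbit_excess x0 k)"
  proof (cases "x = x0")
    case True
    then show ?thesis
      using t start_in_orbit matkowski_nonneg[OF matkowski orbit_excess_nonneg] by simp
  next
    case False
    then obtain j z where j: "j < n" and z: "z \<in> cube (orbit x0 (Suc k))" and xz: "x = \<phi> j z"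
      using x unfolding orbit_Suc[of x0 "Suc k"] GIFS_op_eq by blast
    have "infdist (z $ i) (orbit x0 k) \<le> orbit_excess x0 k" for i
      using z infdist_le_orbit_excess unfolding cube_def by blast
    then show ?thesis
      unfolding t xz using start_in_orbit
      by (intro infdist_image_cube_le[OF j compact_orbit _ image_cube_orbit_subset[OF j]]) auto
  qed
qed

lemma orbit_tail:
  assumes r: "r > 0"
  shows "\<exists>k. \<forall>m\<ge>k. \<forall>x\<in>orbit x0 m. infdist x (orbit x0 k) \<le> r"
proof -
  have "orbit_excess x0 \<longlonglongrightarrow> 0"
    using orbit_excess_nonneg orbit_excess_Suc_le by (rule matkowski_dominated_LIMSEQ[OF matkowski])
  moreover have "0 < r - \<psi> r" using matkowski_less[OF matkowski r] by simp
  ultimately obtain k where k: "orbit_excess x0 k < r - \<psi> r"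
    using order_tendstoD(2) by (metis eventually_sequentially order.refl)
  have "\<forall>x\<in>orbit x0 (k + N). infdist x (orbit x0 k) \<le> r" for N
  proof (induction N)
    case (Suc N)
    show ?case
    proof
      fix x assume x: "x \<in> orbit x0 (k + Suc N)"
      show "infdist x (orbit x0 k) \<le> r"
      proof (cases "x = x0")
        case False
        then obtain j z where j: "j < n" and z: "z \<in> cube (orbit x0 (k + N))" and xz: "x = \<phi> j z"
          using x unfolding add_Suc_right orbit_Suc GIFS_op_eq by blast
        have "infdist (z $ i) (orbit x0 k) \<le> r" for i
          using z Suc.IH unfolding cube_def by blast
        then have "infdist x (orbit x0 (Suc k)) \<le> \<psi> r"
          unfolding xz using start_in_orbit
          by (intro infdist_image_cube_le[OF j compact_orbit _ image_cube_orbit_subset[OF j]]) auto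
        moreover have "infdist x (orbit x0 k) \<le> infdist x (orbit x0 (Suc k)) + orbit_excess x0 k"
          using compact_orbit infdist_le_orbit_excess start_in_orbit[of x0 "Suc k"]
          by (intro infdist_le_infdist_add) auto
        ultimately show ?thesis using k by linarith
      qed (use r start_in_orbit in simp)
    qed
  qed (use r in simp)
  then show ?thesis by (metis le_add_diff_inverse)
qed

lemma GIFS_op_Union_orbit_subset: "F (\<Union>k. orbit x0 k) \<subseteq> (\<Union>k. orbit x0 k)"
proof
  fix x assume "x \<in> F (\<Union>k. orbit x0 k)"
  then obtain j z where j: "j < n" and z: "z \<in> cube (\<Union>k. orbit x0 k)" and x: "x = \<phi> j z"
    unfolding GIFS_op_eq by blast
  have "\<forall>i. \<exists>k. z $ i \<in> orbit x0 k" using z by (simp add: cube_def)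
  then obtain kk where kk: "\<And>i. z $ i \<in> orbit x0 (kk i)" by metis
  have "orbit x0 (kk i) \<subseteq> orbit x0 (Max (range kk))" for i
    by (intro monoD[OF incseq_orbit] Max_ge) auto
  then have "z \<in> cube (orbit x0 (Max (range kk)))" using kk unfolding cube_def by blast
  then show "x \<in> (\<Union>k. orbit x0 k)" using image_cube_orbit_subset[OF j] x by blast
qed

lemma GIFS_op_closure_subset:
  assumes U: "F U \<subseteq> U" shows "F (closure U) \<subseteq> closure U"
proof
  fix x assume "x \<in> F (closure U)"
  then obtain j z where j: "j < n" and z: "z \<in> cube (closure U)" and x: "x = \<phi> j z"
    unfolding GIFS_op_eq by blast
  show "x \<in> closure U" unfolding closure_approachable
  proof (intro allI impI)
    fix e :: real assume e: "e > 0"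
    have "\<forall>i. \<exists>u\<in>U. dist (z $ i) u < e"
      using z e unfolding cube_def by (auto intro: closure_approachableD)
    then obtain y where y: "\<And>i. y i \<in> U \<and> dist (z $ i) (y i) < e" by metis
    then have "(\<chi> i. y i) \<in> cube U" by (simp add: cube_def)
    then have "\<phi> j (\<chi> i. y i) \<in> U" using U image_cube_subset_GIFS_op[OF j] by blast
    moreover have "dist x (\<phi> j (\<chi> i. y i)) \<le> \<psi> e"
      unfolding x using y by (intro dist_image_cube_le[OF j]) (simp add: less_imp_le)
    ultimately show "\<exists>u\<in>U. dist u x < e"
      using matkowski_less[OF matkowski e] by (metis dist_commute le_less_trans)
  qed
qed

lemma exists_invariant_compact: "\<exists>K. compact K \<and> K \<noteq> {} \<and> F K \<subseteq> K"
proof -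
  fix x0 :: 'a
  define K where "K = closure (\<Union>k. orbit x0 k)"
  have "compact K"
    unfolding K_def using compact_orbit start_in_orbit incseq_orbit orbit_tail
    by (intro compact_closure_Union_incseq) blast+
  moreover have "K \<noteq> {}" using start_in_orbit closure_subset unfolding K_def by blast
  moreover have "F K \<subseteq> K"
    unfolding K_def by (rule GIFS_op_closure_subset[OF GIFS_op_Union_orbit_subset])
  ultimately show ?thesis by blast
qed

lemma GIFS_attractor_exists: "\<exists>A. A \<noteq> {} \<and> compact A \<and> A = F A"
proof -
  obtain K where K: "compact K" "K \<noteq> {}" "F K \<subseteq> K" using exists_invariant_compact by blast
  define C where "C k = (F ^^ k) K" for k
  have C: "compact (C k)" "C k \<noteq> {}" for k
    by (induction k) (simp_all add: C_def K compact_GIFS_op GIFS_op_nonempty)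
  have C_Suc: "C (Suc k) = F (C k)" for k by (simp add: C_def)
  have C_Suc_subset: "C (Suc k) \<subseteq> C k" for k
    by (induction k) (use K GIFS_op_mono in \<open>auto simp: C_def\<close>)
  then have C_dec: "decseq C" by (simp add: decseq_Suc_iff)
  define A where "A = (\<Inter>k. C k)"
  have "A \<noteq> {}" unfolding A_def using C C_dec by (rule compact_decseq_Inter_nonempty)
  moreover have "compact A"
  proof -
    have "closed A" unfolding A_def using C(1) by (simp add: closed_INT compact_imp_closed)
    then have "compact (C 0 \<inter> A)" using C(1) by (rule compact_Int_closed[rotated])
    moreover have "C 0 \<inter> A = A" unfolding A_def by blast
    ultimately show ?thesis by simp
  qed
  moreover have "F A = A"
  proof -
    have "F A = (\<Inter>k. C (Suc k))" unfolding A_def C_Suc by (rule GIFS_op_Inter_decseq[OF C(1) C_dec])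
    also have "\<dots> = A" unfolding A_def using C_Suc_subset by blast
    finally show ?thesis .
  qed
  ultimately show ?thesis by auto
qed

lemma GIFS_attractor_eq:
  assumes "A \<noteq> {}" "compact A" "A = F A"
  shows "GIFS_attractor n \<phi> = A"
  unfolding GIFS_attractor_def
proof (rule the_equality)
  fix A' assume "A' \<noteq> {} \<and> compact A' \<and> A' = GIFS_op n \<phi> A'"
  then show "A' = A" using assms expanding_subset_invariant by (metis subset_antisym order.refl)
qed (use assms in blast)

end

section \<open>Fuzzy sets\<close>

definition alpha_cut :: "('a \<Rightarrow> real) \<Rightarrow> real \<Rightarrow> 'a set" where
  "alpha_cut u a = {x. a \<le> u x}"

lemma le_fun_by_positive_cuts:
  assumes cuts: "\<And>a. a > 0 \<Longrightarrow> alpha_cut u a \<subseteq> alpha_cut v a" and v: "\<And>x. 0 \<le> v x"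
  shows "u \<le> v"
proof (rule le_funI)
  fix x show "u x \<le> v x"
  proof (cases "u x > 0")
    case True
    then show ?thesis using cuts[of "u x"] unfolding alpha_cut_def by blast
  qed (use v[of x] in simp)
qed

lemma alpha_cut_Inter_incseq:
  assumes "incseq t" "t \<longlonglongrightarrow> b"
  shows "(\<Inter>k. alpha_cut u (t k)) = alpha_cut u b"
proof
  show "alpha_cut u b \<subseteq> (\<Inter>k. alpha_cut u (t k))"
    using incseq_le[OF assms] unfolding alpha_cut_def by (auto intro: order_trans)
  show "(\<Inter>k. alpha_cut u (t k)) \<subseteq> alpha_cut u b"
    unfolding alpha_cut_def using LIMSEQ_le_const2[OF assms(2)] by blast
qed

lemma alpha_cut_mono: "u \<le> v \<Longrightarrow> alpha_cut u a \<subseteq> alpha_cut v a"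
  unfolding alpha_cut_def le_fun_def by (auto intro: order_trans)

lemma alpha_cut_antimono: "a \<le> b \<Longrightarrow> alpha_cut u b \<subseteq> alpha_cut u a"
  unfolding alpha_cut_def by auto

lemma Fstar_range: "u \<in> Fstar \<Longrightarrow> 0 \<le> u x \<and> u x \<le> 1"
  unfolding Fstar_def fuzzy_set_def by blast

lemma alpha_cut_subset_support: "a > 0 \<Longrightarrow> alpha_cut u a \<subseteq> fuzzy_support u"
  unfolding alpha_cut_def fuzzy_support_def using closure_subset by fastforce

lemma closed_alpha_cut: "u \<in> Fstar \<Longrightarrow> closed (alpha_cut u a)"
  unfolding Fstar_def alpha_cut_def by blast

lemma compact_alpha_cut:
  assumes u: "u \<in> Fstar" and a: "a > 0" shows "compact (alpha_cut u a)"
proof -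
  have "compact (fuzzy_support u \<inter> alpha_cut u a)"
    using u closed_alpha_cut[OF u] unfolding Fstar_def by (intro compact_Int_closed) auto
  then show ?thesis using alpha_cut_subset_support[OF a, of u] by (simp add: inf.absorb2)
qed

lemma alpha_cut_nonempty:
  assumes "u \<in> Fstar" "a \<le> 1" shows "alpha_cut u a \<noteq> {}"
proof -
  obtain x where "u x = 1" using assms(1) unfolding Fstar_def by blast
  then have "x \<in> alpha_cut u a" using assms(2) by (simp add: alpha_cut_def)
  then show ?thesis by blast
qed

lemma FstarI:
  assumes "\<And>x. 0 \<le> u x" "\<And>x. u x \<le> 1" "u x = 1" "\<And>a. closed (alpha_cut u a)" "compact (fuzzy_support u)"
  shows "u \<in> Fstar"
  using assms unfolding Fstar_def fuzzy_set_def alpha_cut_def by blast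

lemma indicator_Fstar:
  fixes K :: "'a::t2_space set"
  assumes "compact K" "K \<noteq> {}" shows "indicator K \<in> Fstar"
proof -
  obtain x where "x \<in> K" using assms(2) by blast
  show ?thesis
  proof (rule FstarI[where x = x])
    show "indicator K x = (1::real)" using \<open>x \<in> K\<close> by simp
    have "alpha_cut (indicator K) a = (if a \<le> 0 then UNIV else if a \<le> 1 then K else {})" for a
      by (auto simp: alpha_cut_def indicator_def)
    then show "closed (alpha_cut (indicator K :: 'a \<Rightarrow> real) a)" for a
      using compact_imp_closed[OF assms(1)] by simp
    have "{x. 0 < (indicator K x :: real)} = K" by (auto simp: indicator_def)
    then show "compact (fuzzy_support (indicator K :: 'a \<Rightarrow> real))"
      unfolding fuzzy_support_def using assms(1) by (simp add: compact_imp_closed closure_closed)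
  qed (auto simp: indicator_def)
qed

lemma alpha_cut_indicator: "0 < a \<Longrightarrow> a \<le> 1 \<Longrightarrow> alpha_cut (indicator K) a = K"
  by (auto simp: alpha_cut_def indicator_def)

lemma fz_prod_ge_iff: "b \<le> fz_prod (\<lambda>_. u) (z::'a^('m::finite)) \<longleftrightarrow> (\<forall>i. b \<le> u (z $ i))"
  unfolding fz_prod_def by (simp add: Min_ge_iff)

lemma alpha_cut_fz_prod: "alpha_cut (fz_prod (\<lambda>_. u)) b = (cube (alpha_cut u b) :: ('a^'m::finite) set)"
  unfolding alpha_cut_def cube_def by (simp add: fz_prod_ge_iff)

lemma fz_prod_le_component: "fz_prod (\<lambda>_. u) (z::'a^('m::finite)) \<le> u (z $ i)"
  unfolding fz_prod_def by (rule Min_le) auto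

lemma fz_prod_range:
  assumes "\<And>x. 0 \<le> u x \<and> u x \<le> 1"
  shows "0 \<le> fz_prod (\<lambda>_. u) (z::'a^('m::finite)) \<and> fz_prod (\<lambda>_. u) z \<le> 1"
  using assms fz_prod_le_component[of u z] by (auto simp: fz_prod_ge_iff intro: order_trans)

lemma fz_image_ge:
  assumes "bdd_above (range w)" "T z = y" shows "w z \<le> fz_image T w y"
proof -
  have "bdd_above {w z | z. T z = y}" using assms(1) by (rule bdd_above_mono) auto
  then show ?thesis unfolding fz_image_def using assms(2) by (auto intro: cSup_upper)
qed

lemma less_fz_image_iff:
  assumes "bdd_above (range w)" "0 \<le> t"
  shows "t < fz_image T w y \<longleftrightarrow> (\<exists>z. T z = y \<and> t < w z)"
proof (cases "y \<in> range T")
  case True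
  have "bdd_above {w z | z. T z = y}" using assms(1) by (rule bdd_above_mono) auto
  moreover have "{w z | z. T z = y} \<noteq> {}" using True by auto
  ultimately show ?thesis unfolding fz_image_def using True by (auto simp: less_cSup_iff)
qed (use assms(2) in \<open>auto simp: fz_image_def\<close>)

lemma fz_image_range:
  assumes "\<And>z. 0 \<le> w z \<and> w z \<le> 1" shows "0 \<le> fz_image T w y \<and> fz_image T w y \<le> 1"
proof (cases "y \<in> range T")
  case True
  then have "{w z | z. T z = y} \<noteq> {}" by auto
  moreover have "bdd_above (range w)" using assms by (auto intro!: bdd_aboveI[of _ 1])
  ultimately show ?thesis
    using True assms fz_image_ge[of w T] unfolding fz_image_def
    by (auto intro: cSup_least order_trans)
qed (simp add: fz_image_def)

lemma alpha_cut_fz_image_prod: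
  fixes T :: "('a::metric_space)^('m::finite) \<Rightarrow> 'b::t2_space"
  assumes T: "continuous_on UNIV T" and u: "u \<in> Fstar" and b: "b > 0"
  shows "alpha_cut (fz_image T (fz_prod (\<lambda>_. u))) b = T ` cube (alpha_cut u b)"
proof -
  have "0 \<le> fz_prod (\<lambda>_. u) z \<and> fz_prod (\<lambda>_. u) z \<le> 1" for z :: "'a^'m"
    using Fstar_range[OF u] by (rule fz_prod_range)
  then have bdd: "bdd_above (range (fz_prod (\<lambda>_. u) :: 'a^'m \<Rightarrow> real))"
    by (auto intro!: bdd_aboveI[of _ 1])
  define t where "t k = b - b / real (k + 2)" for k
  have t: "0 < t k" "t k < b" for k
    using b by (auto simp: t_def field_simps intro!: add_pos_nonneg)
  have "b / real (Suc k + 2) \<le> b / real (k + 2)" for k using b by (intro frac_le) auto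
  then have "incseq t" by (intro incseq_SucI) (simp add: t_def)
  moreover have "t \<longlonglongrightarrow> b - 0"
    unfolding t_def by (intro tendsto_diff tendsto_const LIMSEQ_ignore_initial_segment lim_const_over_n)
  then have "t \<longlonglongrightarrow> b" by simp
  ultimately have cuts: "(\<Inter>k. alpha_cut u (t k)) = alpha_cut u b" by (rule alpha_cut_Inter_incseq)
  have dec: "decseq (\<lambda>k. cube (alpha_cut u (t k)) :: ('a^'m) set)"
    using \<open>incseq t\<close> by (intro decseq_SucI cube_mono alpha_cut_antimono) (simp add: incseq_Suc_iff)
  show ?thesis
  proof
    show "T ` cube (alpha_cut u b) \<subseteq> alpha_cut (fz_image T (fz_prod (\<lambda>_. u))) b"
    proof
      fix y assume "y \<in> T ` cube (alpha_cut u b)"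
      then obtain z where z: "z \<in> cube (alpha_cut u b)" "y = T z" by blast
      then have "b \<le> fz_prod (\<lambda>_. u) z" by (simp add: fz_prod_ge_iff cube_def alpha_cut_def)
      also have "\<dots> \<le> fz_image T (fz_prod (\<lambda>_. u)) y" using z(2) by (intro fz_image_ge[OF bdd]) simp
      finally show "y \<in> alpha_cut (fz_image T (fz_prod (\<lambda>_. u))) b" by (simp add: alpha_cut_def)
    qed
    show "alpha_cut (fz_image T (fz_prod (\<lambda>_. u))) b \<subseteq> T ` cube (alpha_cut u b)"
    proof
      fix y assume "y \<in> alpha_cut (fz_image T (fz_prod (\<lambda>_. u))) b"
      then have above: "t k < fz_image T (fz_prod (\<lambda>_. u)) y" for k
        using t(2)[of k] unfolding alpha_cut_def by simp
      then have "y \<in> T ` cube (alpha_cut u (t k))" for k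
      proof -
        obtain z where "T z = y" "t k < fz_prod (\<lambda>_. u) z"
          using less_fz_image_iff[OF bdd less_imp_le[OF t(1)[of k]], of T y] above[of k] by blast
        then have "z \<in> alpha_cut (fz_prod (\<lambda>_. u)) (t k)" "y = T z" by (simp_all add: alpha_cut_def)
        then show ?thesis unfolding alpha_cut_fz_prod by blast
      qed
      moreover have "T ` (\<Inter>k. cube (alpha_cut u (t k))) = (\<Inter>k. T ` cube (alpha_cut u (t k)))"
        using compact_cube[OF compact_alpha_cut[OF u t(1)]] dec continuous_on_subset[OF T]
        by (intro continuous_image_Inter_decseq) auto
      ultimately have "y \<in> T ` (\<Inter>k. cube (alpha_cut u (t k)))" by simp
      then show "y \<in> T ` cube (alpha_cut u b)" by (simp add: cube_Inter[symmetric] cuts)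
    qed
  qed
qed

lemma alpha_cut_INF:
  assumes "\<And>k x. 0 \<le> w k x"
  shows "alpha_cut (\<lambda>x. INF k. w k x) a = (\<Inter>k. alpha_cut (w k) a)"
proof -
  have "bdd_below (range (\<lambda>k. w k x))" for x using assms by (auto intro!: bdd_belowI[of _ 0])
  then show ?thesis
    unfolding alpha_cut_def by (auto intro: cINF_greatest cINF_lower order_trans)
qed

lemma Fstar_INF_decreasing:
  fixes w :: "nat \<Rightarrow> 'a::t2_space \<Rightarrow> real"
  assumes w: "\<And>k. w k \<in> Fstar" and dec: "\<And>k. w (Suc k) \<le> w k"
  shows "(\<lambda>x. INF k. w k x) \<in> Fstar"
proof -
  define u where "u x = (INF k. w k x)" for x
  have nonneg: "0 \<le> w k x" for k x using Fstar_range[OF w] by blast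
  have cuts: "alpha_cut u a = (\<Inter>k. alpha_cut (w k) a)" for a
    unfolding u_def by (rule alpha_cut_INF[OF nonneg])
  have "decseq (\<lambda>k. alpha_cut (w k) a)" for a
    using dec by (intro decseq_SucI alpha_cut_mono)
  then have "alpha_cut u 1 \<noteq> {}"
    unfolding cuts using compact_alpha_cut[OF w] alpha_cut_nonempty[OF w]
    by (intro compact_decseq_Inter_nonempty) auto
  then obtain x where x: "1 \<le> u x" unfolding alpha_cut_def by blast
  have "0 \<le> u y" "u y \<le> w 0 y" for y
    unfolding u_def using nonneg by (auto intro!: cINF_greatest cINF_lower bdd_belowI[of _ 0])
  moreover have "w 0 y \<le> 1" for y using Fstar_range[OF w] by blast
  moreover have "closed (alpha_cut u a)" for a
    unfolding cuts using closed_alpha_cut[OF w] by blast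
  moreover have "compact (fuzzy_support u)"
  proof -
    have sub: "fuzzy_support u \<subseteq> fuzzy_support (w 0)"
      unfolding fuzzy_support_def using calculation(2) by (intro closure_mono) (auto intro: less_le_trans)
    have "compact (fuzzy_support u \<inter> fuzzy_support (w 0))"
      using w[of 0] unfolding Fstar_def by (intro closed_Int_compact) (auto simp: fuzzy_support_def)
    then show ?thesis using sub by (simp add: inf.absorb1)
  qed
  moreover have "u x = 1" using x calculation(2,3)[of x] by simp
  ultimately have "u \<in> Fstar" by (intro FstarI[of u x]) (auto intro: order_trans)
  then show ?thesis by (simp add: u_def[abs_def])
qed

section \<open>Generalized IFZS and their fuzzy attractors\<close>

text \<open>The least level at which \<open>f\<close> reaches \<open>a\<close>; right continuity makes the infimum a minimum.\<close>

definition gen_inverse :: "(real \<Rightarrow> real) \<Rightarrow> real \<Rightarrow> real" where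
  "gen_inverse f a = Inf {t \<in> {0..1}. a \<le> f t}"

context
  fixes f :: "real \<Rightarrow> real"
  assumes mono: "\<And>s t. 0 \<le> s \<Longrightarrow> s \<le> t \<Longrightarrow> t \<le> 1 \<Longrightarrow> f s \<le> f t"
    and right_continuous: "\<And>t. 0 \<le> t \<Longrightarrow> t < 1 \<Longrightarrow> continuous (at_right t) f"
    and zero: "f 0 = 0"
begin

lemma gen_inverse_bounds:
  assumes a: "0 < a" "a \<le> f 1"
  shows "0 < gen_inverse f a" "gen_inverse f a \<le> 1" "a \<le> f (gen_inverse f a)"
proof -
  define T where "T = {t \<in> {0..1}. a \<le> f t}"
  have T: "1 \<in> T" "bdd_below T" using a unfolding T_def by (auto intro: bdd_belowI[of _ 0])
  define b where "b = Inf T"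
  have b: "0 \<le> b" "b \<le> 1"
    unfolding b_def using T by (auto intro: cInf_greatest cInf_lower simp: T_def)
  have above: "a \<le> f s" if s: "b < s" "s \<le> 1" for s
  proof -
    have "T \<noteq> {}" using T(1) by blast
    then obtain t where "t \<in> T" "t < s" using cInf_less_iff[of T s] s(1) T(2) unfolding b_def by blast
    then show ?thesis using mono[of t s] s(2) unfolding T_def by auto
  qed
  have fb: "a \<le> f b"
  proof (cases "b < 1")
    case True
    have "(f \<longlongrightarrow> f b) (at_right b)" using right_continuous[OF b(1) True] by (simp add: continuous_within)
    moreover have "eventually (\<lambda>s. a \<le> f s) (at_right b)"
      unfolding eventually_at_right_field using True above by (auto intro!: exI[of _ 1])
    ultimately show ?thesis by (rule tendsto_lowerbound) simp
  qed (use a b in simp)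
  then show "a \<le> f (gen_inverse f a)" by (simp add: gen_inverse_def T_def b_def)
  show "gen_inverse f a \<le> 1" using b(2) by (simp add: gen_inverse_def T_def b_def)
  have "b \<noteq> 0" using fb zero a(1) by auto
  then show "0 < gen_inverse f a" using b(1) by (simp add: gen_inverse_def T_def b_def)
qed

lemma le_iff_gen_inverse_le:
  assumes a: "0 < a" and g: "0 \<le> g" "g \<le> 1"
  shows "a \<le> f g \<longleftrightarrow> a \<le> f 1 \<and> gen_inverse f a \<le> g"
proof
  assume ag: "a \<le> f g"
  then have "a \<le> f 1" using mono[OF g order.refl] by simp
  moreover have "bdd_below {t \<in> {0..1}. a \<le> f t}" by (auto intro: bdd_belowI[of _ 0])
  ultimately show "a \<le> f 1 \<and> gen_inverse f a \<le> g"
    unfolding gen_inverse_def using ag g by (auto intro: cInf_lower)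
next
  assume "a \<le> f 1 \<and> gen_inverse f a \<le> g"
  then show "a \<le> f g"
    using gen_inverse_bounds[OF a] mono[of "gen_inverse f a" g] g by (auto intro: order_trans)
qed

end

locale gifzs = gifs n \<phi> \<psi> for n and \<phi> :: "nat \<Rightarrow> ('a::complete_space)^('m::finite) \<Rightarrow> 'a" and \<psi> +
  fixes \<rho> :: "nat \<Rightarrow> real \<Rightarrow> real"
  assumes admissible: "admissible n \<rho>"
begin

lemma indices_nonempty: "{..<n} \<noteq> {}"
  using n_pos by auto

lemma rho_mono: "j < n \<Longrightarrow> 0 \<le> s \<Longrightarrow> s \<le> t \<Longrightarrow> t \<le> 1 \<Longrightarrow> \<rho> j s \<le> \<rho> j t"
  using admissible unfolding admissible_def by blast

lemma rho_right_continuous: "j < n \<Longrightarrow> 0 \<le> t \<Longrightarrow> t < 1 \<Longrightarrow> continuous (at_right t) (\<rho> j)"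
  using admissible unfolding admissible_def by auto

lemma rho_zero: "j < n \<Longrightarrow> \<rho> j 0 = 0"
  using admissible unfolding admissible_def by blast

lemma rho_range: "j < n \<Longrightarrow> 0 \<le> t \<Longrightarrow> t \<le> 1 \<Longrightarrow> 0 \<le> \<rho> j t \<and> \<rho> j t \<le> 1"
  using admissible unfolding admissible_def by auto

lemma ex_rho_one: "\<exists>j<n. \<rho> j 1 = 1"
  using admissible unfolding admissible_def by blast

lemma gen_inverse_rho_bounds:
  assumes "j < n" "0 < a" "a \<le> \<rho> j 1"
  shows "0 < gen_inverse (\<rho> j) a" "gen_inverse (\<rho> j) a \<le> 1"
  using gen_inverse_bounds[OF rho_mono[OF assms(1)] rho_right_continuous[OF assms(1)] rho_zero[OF assms(1)]
      assms(2,3)] by auto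

abbreviation Z :: "('a \<Rightarrow> real) \<Rightarrow> 'a \<Rightarrow> real" where
  "Z u \<equiv> GIFZS_op n \<phi> \<rho> (\<lambda>_. u)"

lemma fz_image_phi_range:
  "u \<in> Fstar \<Longrightarrow> 0 \<le> fz_image (\<phi> j) (fz_prod (\<lambda>_. u)) y \<and> fz_image (\<phi> j) (fz_prod (\<lambda>_. u)) y \<le> 1"
  by (intro fz_image_range fz_prod_range Fstar_range)

lemma le_rho_fz_image_iff:
  assumes u: "u \<in> Fstar" and j: "j < n" and a: "0 < a"
  shows "a \<le> \<rho> j (fz_image (\<phi> j) (fz_prod (\<lambda>_. u)) y)
    \<longleftrightarrow> a \<le> \<rho> j 1 \<and> y \<in> \<phi> j ` cube (alpha_cut u (gen_inverse (\<rho> j) a))"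
proof -
  note inverse = gen_inverse_bounds[OF rho_mono[OF j] rho_right_continuous[OF j] rho_zero[OF j] a]
    le_iff_gen_inverse_le[OF rho_mono[OF j] rho_right_continuous[OF j] rho_zero[OF j] a]
  have "a \<le> \<rho> j (fz_image (\<phi> j) (fz_prod (\<lambda>_. u)) y)
      \<longleftrightarrow> a \<le> \<rho> j 1 \<and> gen_inverse (\<rho> j) a \<le> fz_image (\<phi> j) (fz_prod (\<lambda>_. u)) y"
    using inverse(4) fz_image_phi_range[OF u] by blast
  also have "\<dots> \<longleftrightarrow> a \<le> \<rho> j 1 \<and> y \<in> \<phi> j ` cube (alpha_cut u (gen_inverse (\<rho> j) a))"
    using alpha_cut_fz_image_prod[OF continuous[OF j] u] inverse(1) by (auto simp: alpha_cut_def)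
  finally show ?thesis .
qed

lemma alpha_cut_Z:
  assumes u: "u \<in> Fstar" and a: "0 < a"
  shows "alpha_cut (Z u) a
    = (\<Union>j\<in>{j. j < n \<and> a \<le> \<rho> j 1}. \<phi> j ` cube (alpha_cut u (gen_inverse (\<rho> j) a)))"
proof -
  have "a \<le> Z u y \<longleftrightarrow> (\<exists>j<n. a \<le> \<rho> j (fz_image (\<phi> j) (fz_prod (\<lambda>_. u)) y))" for y
    unfolding GIFZS_op_def by (simp add: Max_ge_iff indices_nonempty lessThan_iff Bex_def)
  then show ?thesis using le_rho_fz_image_iff[OF u _ a] by (auto simp: alpha_cut_def)
qed

lemma Z_range: "u \<in> Fstar \<Longrightarrow> 0 \<le> Z u y \<and> Z u y \<le> 1"
  unfolding GIFZS_op_def using rho_range fz_image_phi_range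
  by (simp add: Max_ge_iff Max_le_iff indices_nonempty) (meson lessThan_iff n_pos)

lemma Z_mono:
  assumes u: "u \<in> Fstar" and v: "v \<in> Fstar" and uv: "u \<le> v"
  shows "Z u \<le> Z v"
proof (rule le_fun_by_positive_cuts)
  fix a :: real assume a: "a > 0"
  have "alpha_cut u b \<subseteq> alpha_cut v b" for b using uv by (rule alpha_cut_mono)
  then show "alpha_cut (Z u) a \<subseteq> alpha_cut (Z v) a"
    unfolding alpha_cut_Z[OF u a] alpha_cut_Z[OF v a] by (intro UN_mono image_mono cube_mono) auto
qed (use Z_range[OF v] in blast)

lemma Z_Fstar:
  assumes u: "u \<in> Fstar" shows "Z u \<in> Fstar"
proof -
  obtain j where j: "j < n" "\<rho> j 1 = 1" using ex_rho_one by blast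
  have "gen_inverse (\<rho> j) 1 \<le> 1" using gen_inverse_rho_bounds(2)[OF j(1) zero_less_one] j(2) by simp
  then have "alpha_cut u (gen_inverse (\<rho> j) 1) \<noteq> {}" by (rule alpha_cut_nonempty[OF u])
  then obtain z where "z \<in> (cube (alpha_cut u (gen_inverse (\<rho> j) 1)) :: ('a^'m) set)"
    using cube_eq_empty_iff by blast
  then have "\<phi> j z \<in> alpha_cut (Z u) 1" unfolding alpha_cut_Z[OF u zero_less_one] using j by auto
  then have "alpha_cut (Z u) 1 \<noteq> {}" by blast
  then obtain x where "1 \<le> Z u x" unfolding alpha_cut_def by blast
  then have x: "Z u x = 1" using Z_range[OF u, of x] by simp
  have closed: "closed (alpha_cut (Z u) a)" for a
  proof (cases "a > 0")
    case True
    then show ?thesis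
      unfolding alpha_cut_Z[OF u True]
      using compact_image_cube compact_alpha_cut[OF u] gen_inverse_rho_bounds(1)
      by (intro closed_UN compact_imp_closed) auto
  next
    case False
    then have "a \<le> Z u y" for y using Z_range[OF u, of y] by linarith
    then have "alpha_cut (Z u) a = UNIV" by (simp add: alpha_cut_def)
    then show ?thesis by simp
  qed
  have "{y. 0 < Z u y} \<subseteq> F (fuzzy_support u)"
  proof
    fix y assume "y \<in> {y. 0 < Z u y}"
    then have pos: "0 < Z u y" by simp
    have "y \<in> alpha_cut (Z u) (Z u y)" by (simp add: alpha_cut_def)
    then obtain j where j: "j < n" "Z u y \<le> \<rho> j 1"
      and y: "y \<in> \<phi> j ` cube (alpha_cut u (gen_inverse (\<rho> j) (Z u y)))"
      unfolding alpha_cut_Z[OF u pos] by blast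
    have "alpha_cut u (gen_inverse (\<rho> j) (Z u y)) \<subseteq> fuzzy_support u"
      using gen_inverse_rho_bounds(1)[OF j(1) pos j(2)] by (rule alpha_cut_subset_support)
    then show "y \<in> F (fuzzy_support u)"
      using y image_cube_subset_GIFS_op[OF j(1)] cube_mono by blast
  qed
  moreover have "compact (F (fuzzy_support u))" using u unfolding Fstar_def by (intro compact_GIFS_op) blast
  ultimately have "fuzzy_support (Z u) \<subseteq> F (fuzzy_support u)"
    unfolding fuzzy_support_def by (intro closure_minimal compact_imp_closed)
  then have "compact (fuzzy_support (Z u))"
    using \<open>compact (F (fuzzy_support u))\<close> unfolding fuzzy_support_def
    by (metis closed_closure closed_Int_compact inf.absorb1)
  then show ?thesis using Z_range[OF u] x closed by (intro FstarI[of _ x]) auto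
qed

lemma Fstar_le_by_excess:
  assumes p: "p \<in> Fstar" and q: "q \<in> Fstar" and sub: "p \<le> Z p" and super: "Z q \<le> q"
  shows "p \<le> q"
proof (rule le_fun_by_positive_cuts)
  define I where "I = {0<..(1::real)}"
  define R where "R = diameter (fuzzy_support p \<union> fuzzy_support q)"
  have "bounded (fuzzy_support p \<union> fuzzy_support q)"
    using p q unfolding Fstar_def by (blast intro: compact_imp_bounded compact_Un)
  then have bounded: "infdist x (alpha_cut q b) \<le> R" if b: "b \<in> I" and x: "x \<in> alpha_cut p b" for b x
  proof -
    have "alpha_cut q b \<noteq> {}" using alpha_cut_nonempty[OF q] b unfolding I_def by simp
    then obtain y where y: "y \<in> alpha_cut q b" by blast
    have "x \<in> fuzzy_support p" "y \<in> fuzzy_support q"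
      using alpha_cut_subset_support b x y unfolding I_def by fastforce+
    then have "dist x y \<le> R" unfolding R_def using \<open>bounded _\<close> by (intro diameter_bounded_bound) auto
    then show ?thesis using infdist_le[OF y, of x] by simp
  qed
  have step: "\<exists>j<n. \<exists>c\<in>I. \<exists>z\<in>cube (alpha_cut p c). x = \<phi> j z \<and> \<phi> j ` cube (alpha_cut q c) \<subseteq> alpha_cut q b"
    if b: "b \<in> I" and x: "x \<in> alpha_cut p b" for b x
  proof -
    have b0: "0 < b" using b unfolding I_def by simp
    have "x \<in> alpha_cut (Z p) b" using alpha_cut_mono[OF sub] x by blast
    then obtain j where j: "j < n" "b \<le> \<rho> j 1"
      and xj: "x \<in> \<phi> j ` cube (alpha_cut p (gen_inverse (\<rho> j) b))"
      unfolding alpha_cut_Z[OF p b0] by blast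
    have "\<phi> j ` cube (alpha_cut q (gen_inverse (\<rho> j) b)) \<subseteq> alpha_cut (Z q) b"
      unfolding alpha_cut_Z[OF q b0] using j by blast
    also have "\<dots> \<subseteq> alpha_cut q b" by (rule alpha_cut_mono[OF super])
    finally have "\<phi> j ` cube (alpha_cut q (gen_inverse (\<rho> j) b)) \<subseteq> alpha_cut q b" .
    moreover obtain z where "z \<in> cube (alpha_cut p (gen_inverse (\<rho> j) b))" "x = \<phi> j z"
      using xj by blast
    moreover have "gen_inverse (\<rho> j) b \<in> I"
      using gen_inverse_rho_bounds[OF j(1) b0 j(2)] unfolding I_def by simp
    ultimately show ?thesis using j(1) by blast
  qed
  fix a :: real assume a: "0 < a"
  show "alpha_cut p a \<subseteq> alpha_cut q a"
  proof (cases "a \<le> 1")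
    case True
    have "a \<in> I" using a True unfolding I_def by simp
    moreover have "compact (alpha_cut q b)" "alpha_cut q b \<noteq> {}" if "b \<in> I" for b
      using compact_alpha_cut[OF q] alpha_cut_nonempty[OF q] that unfolding I_def by auto
    ultimately show ?thesis using bounded step by (rule subset_by_excess[rotated -1])
  next
    case False
    then have "p x < a" for x using Fstar_range[OF p, of x] by linarith
    then show ?thesis unfolding alpha_cut_def using not_le by blast
  qed
next
  show "0 \<le> q x" for x using Fstar_range[OF q] by blast
qed

lemma Z_indicator_le:
  assumes K: "compact K" "K \<noteq> {}" "F K \<subseteq> K"
  shows "Z (indicator K) \<le> indicator K"
proof (rule le_fun_by_positive_cuts)
  have \<chi>: "indicator K \<in> Fstar" using K(1,2) by (rule indicator_Fstar)
  fix a :: real assume a: "0 < a"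
  show "alpha_cut (Z (indicator K)) a \<subseteq> alpha_cut (indicator K) a"
  proof (cases "a \<le> 1")
    case True
    have "\<phi> j ` cube (alpha_cut (indicator K) (gen_inverse (\<rho> j) a)) \<subseteq> K"
      if "j < n" "a \<le> \<rho> j 1" for j
      using alpha_cut_indicator[OF gen_inverse_rho_bounds[OF that(1) a that(2)], of K]
        image_cube_subset_GIFS_op[OF that(1), of K] K(3)
      by simp
    then show ?thesis unfolding alpha_cut_Z[OF \<chi> a] alpha_cut_indicator[OF a True] by blast
  next
    case False
    then have "Z (indicator K) x < a" for x using Z_range[OF \<chi>, of x] by linarith
    then show ?thesis unfolding alpha_cut_def using not_le by blast
  qed
qed (simp add: indicator_def)

lemma alpha_cut_Z_INF:
  assumes w: "\<And>k. w k \<in> Fstar" "\<And>k. w (Suc k) \<le> w k" and a: "0 < a"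
  shows "alpha_cut (Z (\<lambda>x. INF k. w k x)) a = (\<Inter>k. alpha_cut (Z (w k)) a)"
proof -
  define J where "J = {j. j < n \<and> a \<le> \<rho> j 1}"
  define \<beta> where "\<beta> j = gen_inverse (\<rho> j) a" for j
  have \<beta>: "0 < \<beta> j" if "j \<in> J" for j
    using gen_inverse_rho_bounds(1)[OF _ a] that unfolding J_def \<beta>_def by blast
  have dec: "decseq (\<lambda>k. cube (alpha_cut (w k) (\<beta> j)) :: ('a^'m) set)" for j
    using w(2) by (intro decseq_SucI cube_mono alpha_cut_mono)
  have "\<phi> j ` cube (alpha_cut (\<lambda>x. INF k. w k x) (\<beta> j)) = (\<Inter>k. \<phi> j ` cube (alpha_cut (w k) (\<beta> j)))"
    if "j \<in> J" for j
  proof -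
    have "alpha_cut (\<lambda>x. INF k. w k x) (\<beta> j) = (\<Inter>k. alpha_cut (w k) (\<beta> j))"
      using Fstar_range[OF w(1)] by (intro alpha_cut_INF) blast
    moreover have "\<phi> j ` (\<Inter>k. cube (alpha_cut (w k) (\<beta> j))) = (\<Inter>k. \<phi> j ` cube (alpha_cut (w k) (\<beta> j)))"
      using compact_cube[OF compact_alpha_cut[OF w(1) \<beta>[OF that]]] dec continuous that
      by (intro continuous_image_Inter_decseq) (auto simp: J_def intro: continuous_on_subset)
    ultimately show ?thesis by (simp add: cube_Inter)
  qed
  moreover have "decseq (\<lambda>k. \<phi> j ` cube (alpha_cut (w k) (\<beta> j)))" for j
    using dec[of j] unfolding decseq_def by (simp add: image_mono)
  then have "(\<Inter>k. \<Union>j\<in>J. \<phi> j ` cube (alpha_cut (w k) (\<beta> j)))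
      = (\<Union>j\<in>J. \<Inter>k. \<phi> j ` cube (alpha_cut (w k) (\<beta> j)))"
    by (intro Inter_Union_decseq_finite) (auto simp: J_def)
  ultimately show ?thesis
    using Fstar_INF_decreasing[of w, OF w(1) w(2)] w(1)
    by (simp add: alpha_cut_Z a J_def[symmetric] \<beta>_def[symmetric])
qed

lemma fuzzy_attractor_exists: "\<exists>u\<in>Fstar. Z u = u"
proof -
  obtain K where K: "compact K" "K \<noteq> {}" "F K \<subseteq> K" using exists_invariant_compact by blast
  define w where "w k = (Z ^^ k) (indicator K)" for k
  have w_Suc: "w (Suc k) = Z (w k)" for k by (simp add: w_def)
  have w: "w k \<in> Fstar" for k
    by (induction k) (simp_all add: w_def indicator_Fstar[OF K(1,2)] Z_Fstar)
  have dec: "w (Suc k) \<le> w k" for k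
  proof (induction k)
    case 0
    show ?case using Z_indicator_le[OF K] by (simp add: w_def)
  next
    case (Suc k)
    have "Z (w (Suc k)) \<le> Z (w k)" by (rule Z_mono[OF w w Suc.IH])
    then show ?case by (simp only: w_Suc)
  qed
  define u where "u x = (INF k. w k x)" for x
  have u: "u \<in> Fstar" unfolding u_def by (rule Fstar_INF_decreasing[of w, OF w dec])
  have "alpha_cut (Z u) a = alpha_cut u a" if a: "0 < a" for a
  proof -
    have "alpha_cut (Z u) a = (\<Inter>k. alpha_cut (w (Suc k)) a)"
      unfolding u_def w_Suc by (rule alpha_cut_Z_INF[of w, OF w dec a])
    also have "\<dots> = (\<Inter>k. alpha_cut (w k) a)"
      using alpha_cut_mono[OF dec] by blast
    also have "\<dots> = alpha_cut u a"
      unfolding u_def using Fstar_range[OF w] by (intro alpha_cut_INF[symmetric]) blast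
    finally show ?thesis .
  qed
  then have "Z u = u"
    using Fstar_range[OF u] Z_range[OF u] by (intro order_antisym le_fun_by_positive_cuts) auto
  then show ?thesis using u by blast
qed

lemma fuzzy_attractor_eq:
  assumes "u \<in> Fstar" "Z u = u"
  shows "fuzzy_attractor n \<phi> \<rho> = u"
  unfolding fuzzy_attractor_def
proof (rule the_equality)
  fix u' assume "u' \<in> Fstar \<and> Z u' = u'"
  then show "u' = u" using assms Fstar_le_by_excess by (metis order.antisym order.refl)
qed (use assms in blast)

end

lemma matkowski_GIFS_imp_gifs:
  fixes \<phi> :: "nat \<Rightarrow> ('a::complete_space)^('m::finite) \<Rightarrow> 'a"
  assumes S: "matkowski_GIFS n \<phi>" and n: "0 < n"
  obtains \<psi> where "gifs n \<phi> \<psi>"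
proof -
  have "\<forall>j. \<exists>\<psi>. j < n \<longrightarrow> matkowski_function \<psi> \<and> (\<forall>x y. dist (\<phi> j x) (\<phi> j y) \<le> \<psi> (dmax x y))"
    using S unfolding matkowski_GIFS_def matkowski_function_def by blast
  then obtain \<psi> where \<psi>: "\<And>j. j < n \<Longrightarrow> matkowski_function (\<psi> j)"
    "\<And>j x y. j < n \<Longrightarrow> dist (\<phi> j x) (\<phi> j y) \<le> \<psi> j (dmax x y)"
    by metis
  define \<Psi> where "\<Psi> t = Max ((\<lambda>j. \<psi> j t) ` {..<n})" for t
  have "gifs n \<phi> \<Psi>"
  proof
    show "matkowski_function \<Psi>"
      unfolding \<Psi>_def[abs_def] using n \<psi>(1) by (intro matkowski_function_Max) auto
    fix j and x y :: "'a^'m" assume j: "j < n"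
    have "\<psi> j (dmax x y) \<le> \<Psi> (dmax x y)" unfolding \<Psi>_def using j by (intro Max_ge) auto
    then show "dist (\<phi> j x) (\<phi> j y) \<le> \<Psi> (dmax x y)" using \<psi>(2)[OF j, of x y] by linarith
  qed (use n S in \<open>auto simp: matkowski_GIFS_def\<close>)
  then show ?thesis by (rule that)
qed

theorem mainTheorem15:
  fixes \<phi> :: "nat \<Rightarrow> ('a::complete_space)^'m \<Rightarrow> 'a"
    and \<rho> :: "nat \<Rightarrow> real \<Rightarrow> real"
    and n :: nat
    and B :: "'a set"
    and v :: "'a \<Rightarrow> real"
  assumes S: "matkowski_GIFS n \<phi>"
    and adm: "admissible n \<rho>"
    and B: "B \<noteq> {}" "compact B"
    and v: "v \<in> Fstar"
  shows "(GIFZS_op n \<phi> \<rho> (\<lambda>_. v) \<le> v \<longrightarrow> fuzzy_attractor n \<phi> \<rho> \<le> v)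
       \<and> (GIFS_op n \<phi> B \<subseteq> B \<longrightarrow> GIFS_attractor n \<phi> \<subseteq> B)
       \<and> (v \<le> GIFZS_op n \<phi> \<rho> (\<lambda>_. v) \<longrightarrow> v \<le> fuzzy_attractor n \<phi> \<rho>)
       \<and> (B \<subseteq> GIFS_op n \<phi> B \<longrightarrow> B \<subseteq> GIFS_attractor n \<phi>)"
proof -
  have "0 < n" using adm unfolding admissible_def by auto
  then obtain \<psi> where "gifs n \<phi> \<psi>" using matkowski_GIFS_imp_gifs[OF S] by blast
  then interpret gifzs n \<phi> \<psi> \<rho> using adm by (simp add: gifzs_def gifzs_axioms_def)
  obtain A where A: "A \<noteq> {}" "compact A" "A = F A" using GIFS_attractor_exists by blast
  obtain u where u: "u \<in> Fstar" "Z u = u" using fuzzy_attractor_exists by blast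
  show ?thesis
    unfolding GIFS_attractor_eq[OF A] fuzzy_attractor_eq[OF u]
    using Fstar_le_by_excess[OF u(1) v] Fstar_le_by_excess[OF v u(1)]
      expanding_subset_invariant[OF A(2) _ B(2,1)] expanding_subset_invariant[OF B(2) _ A(2,1)] u(2) A(3)
    by auto
qed

end
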